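(* Let $\pi:P\to M$ be a principal fibre bundle with group $G=P^{-1}P$, in the setting described in the context. There is a bijective correspondence $\theta\leftrightarrow\alpha$ between horizontal equivariant $G$-valued $k$-forms $\theta$ on $P$ and $\mathbf{gauge}(PP^{-1})$-valued $k$-forms $\alpha$ on $M$, characterized by $$u_0\cdot\theta(u_0,\dots,u_k)=\alpha(\pi(u_0),\dots,\pi(u_k))\cdot u_0$$ for every infinitesimal $k$-simplex $(u_0,\dots,u_k)$ in $P$; explicitly $\alpha(a_0,\dots,a_k)=(u_0\theta(u_0,\dots,u_k))u_0^{-1}$ for any infinitesimal $k$-simplex $(u_0,\dots,u_k)$ in $P$ lying over $(a_0,\dots,a_k)$, and $\theta(u_0,\dots,u_k)=u_0^{-1}(\alpha(\pi(u_0),\dots,\pi(u_k))u_0)$.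
   Context: Setting: $\Phi$ is a groupoid whose object set contains a set $M$ and an object $*\notin M$; $P$ is the set of arrows of $\Phi$ with domain $*$ and codomain in $M$; $\pi:P\to M$ is the codomain map; $G=P^{-1}P:=\Phi( *,* )$ acts on $P$ from the right by precomposition, freely and transitively on fibres; for $x,z$ in one fibre, $x^{-1}z\in G$ is computed in $\Phi$. $PP^{-1}$ is the full subgroupoid of $\Phi$ on $M$ (arrows are composites $yx^{-1}$), acting on $P$ from the left by postcomposition. Composition is right to left. $M$ and $P$ carry reflexive symmetric neighbour relations $\sim$; an infinitesimal $k$-simplex is a $(k+1)$-tuple of mutual neighbours; $\pi$ preserves $\sim$; for every infinitesimal $k$-simplex $(a_0,\dots,a_k)$ in $M$ and every $x_0$ over $a_0$ there is an infinitesimal $k$-simplex in $P$ starting at $x_0$ lying over it; the right action of each $g\in G$ preserves $\sim$. The gauge group bundle $\mathbf{gauge}(PP^{-1})$ is the group bundle over $M$ whose fibre over $a$ is the group $PP^{-1}(a,a)$ of endo-arrows at $a$. A $\mathbf{gauge}(PP^{-1})$-valued $k$-form on $M$ assigns to each infinitesimal $k$-simplex $(a_0,\dots,a_k)$ in $M$ an element of $PP^{-1}(a_0,a_0)$. A $G$-valued $k$-form on $P$ assigns an element of $G$ to each infinitesimal $k$-simplex in $P$; it is horizontal if $\theta(u_0,u_1,\dots,u_k)=\theta(u_0,u_1g_1,\dots,u_kg_k)$ whenever $(u_0,u_1g_1,\dots,u_kg_k)$ is still an infinitesimal simplex, and equivariant if $\theta(u_0g,\dots,u_kg)=g^{-1}\theta(u_0,\dots,u_k)g$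 for all infinitesimal $k$-simplices and all $g\in G$. *)

theory Defs
  imports Main
begin

section \<open>Groupoids (composition right to left: cmp g f = g after f)\<close>

record ('o, 'a) gpd =
  Obj  :: "'o set"
  Arr  :: "'a set"
  src  :: "'a \<Rightarrow> 'o"
  tgt  :: "'a \<Rightarrow> 'o"
  cmp  :: "'a \<Rightarrow> 'a \<Rightarrow> 'a"
  idt  :: "'o \<Rightarrow> 'a"
  ginv :: "'a \<Rightarrow> 'a"

definition groupoid :: "('o, 'a) gpd \<Rightarrow> bool" where
  "groupoid \<Phi> \<longleftrightarrow>
     (\<forall>f\<in>Arr \<Phi>. src \<Phi> f \<in> Obj \<Phi> \<and> tgt \<Phi> f \<in> Obj \<Phi>) \<and>
     (\<forall>a\<in>Obj \<Phi>. idt \<Phi> a \<in> Arr \<Phi> \<and> src \<Phi> (idt \<Phi> a) = a \<and> tgt \<Phi> (idt \<Phi> a) = a) \<and>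
     (\<forall>f\<in>Arr \<Phi>. \<forall>g\<in>Arr \<Phi>. src \<Phi> g = tgt \<Phi> f \<longrightarrow>
        cmp \<Phi> g f \<in> Arr \<Phi> \<and> src \<Phi> (cmp \<Phi> g f) = src \<Phi> f \<and> tgt \<Phi> (cmp \<Phi> g f) = tgt \<Phi> g) \<and>
     (\<forall>f\<in>Arr \<Phi>. \<forall>g\<in>Arr \<Phi>. \<forall>h\<in>Arr \<Phi>. src \<Phi> g = tgt \<Phi> f \<longrightarrow> src \<Phi> h = tgt \<Phi> g \<longrightarrow>
        cmp \<Phi> h (cmp \<Phi> g f) = cmp \<Phi> (cmp \<Phi> h g) f) \<and>
     (\<forall>f\<in>Arr \<Phi>. cmp \<Phi> f (idt \<Phi> (src \<Phi> f)) = f \<and> cmp \<Phi> (idt \<Phi> (tgt \<Phi> f)) f = f) \<and>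
     (\<forall>f\<in>Arr \<Phi>. ginv \<Phi> f \<in> Arr \<Phi> \<and> src \<Phi> (ginv \<Phi> f) = tgt \<Phi> f \<and> tgt \<Phi> (ginv \<Phi> f) = src \<Phi> f \<and>
        cmp \<Phi> (ginv \<Phi> f) f = idt \<Phi> (src \<Phi> f) \<and> cmp \<Phi> f (ginv \<Phi> f) = idt \<Phi> (tgt \<Phi> f))"

text \<open>P: arrows from the base point star to objects of M; the projection is tgt.\<close>
definition Pset :: "('o, 'a) gpd \<Rightarrow> 'o set \<Rightarrow> 'o \<Rightarrow> 'a set" where
  "Pset \<Phi> M star = {x \<in> Arr \<Phi>. src \<Phi> x = star \<and> tgt \<Phi> x \<in> M}"

definition Gset :: "('o, 'a) gpd \<Rightarrow> 'o \<Rightarrow> 'a set" where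
  "Gset \<Phi> star = {g \<in> Arr \<Phi>. src \<Phi> g = star \<and> tgt \<Phi> g = star}"

definition gauge_fibre :: "('o, 'a) gpd \<Rightarrow> 'o \<Rightarrow> 'a set" where
  "gauge_fibre \<Phi> a = {f \<in> Arr \<Phi>. src \<Phi> f = a \<and> tgt \<Phi> f = a}"

definition isimp :: "('b \<Rightarrow> 'b \<Rightarrow> bool) \<Rightarrow> 'b set \<Rightarrow> nat \<Rightarrow> 'b list \<Rightarrow> bool" where
  "isimp nb S k xs \<longleftrightarrow> length xs = Suc k \<and> set xs \<subseteq> S \<and> (\<forall>x\<in>set xs. \<forall>y\<in>set xs. nb x y)"

definition refl_sym_on :: "'b set \<Rightarrow> ('b \<Rightarrow> 'b \<Rightarrow> bool) \<Rightarrow> bool" where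
  "refl_sym_on S nb \<longleftrightarrow> (\<forall>x\<in>S. nb x x) \<and> (\<forall>x\<in>S. \<forall>y\<in>S. nb x y \<longrightarrow> nb y x)"

definition pfb_setting ::
  "('o, 'a) gpd \<Rightarrow> 'o set \<Rightarrow> 'o \<Rightarrow> ('o \<Rightarrow> 'o \<Rightarrow> bool) \<Rightarrow> ('a \<Rightarrow> 'a \<Rightarrow> bool) \<Rightarrow> bool" where
  "pfb_setting \<Phi> M star nbM nbP \<longleftrightarrow>
     groupoid \<Phi> \<and> M \<subseteq> Obj \<Phi> \<and> star \<in> Obj \<Phi> \<and> star \<notin> M \<and>
     \<comment> \<open>PP^{-1} is the full subgroupoid on M, its arrows being the composites y x^{-1}\<close>
     (\<forall>f\<in>Arr \<Phi>. src \<Phi> f \<in> M \<longrightarrow> tgt \<Phi> f \<in> M \<longrightarrow>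
        (\<exists>x\<in>Pset \<Phi> M star. \<exists>y\<in>Pset \<Phi> M star. f = cmp \<Phi> y (ginv \<Phi> x))) \<and>
     refl_sym_on M nbM \<and> refl_sym_on (Pset \<Phi> M star) nbP \<and>
     \<comment> \<open>the projection preserves the neighbour relation\<close>
     (\<forall>u\<in>Pset \<Phi> M star. \<forall>v\<in>Pset \<Phi> M star. nbP u v \<longrightarrow> nbM (tgt \<Phi> u) (tgt \<Phi> v)) \<and>
     \<comment> \<open>lifting of infinitesimal simplices\<close>
     (\<forall>k as x0. isimp nbM M k as \<longrightarrow> x0 \<in> Pset \<Phi> M star \<longrightarrow> tgt \<Phi> x0 = hd as \<longrightarrow>
        (\<exists>us. isimp nbP (Pset \<Phi> M star) k us \<and> hd us = x0 \<and> map (tgt \<Phi>) us = as)) \<and>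
     \<comment> \<open>the right action of each g in G preserves the neighbour relation\<close>
     (\<forall>g\<in>Gset \<Phi> star. \<forall>u\<in>Pset \<Phi> M star. \<forall>v\<in>Pset \<Phi> M star.
        nbP u v \<longrightarrow> nbP (cmp \<Phi> u g) (cmp \<Phi> v g))"

text \<open>Forms are functions on lists; to identify forms agreeing on all simplices we use
  the extensional convention that a form takes the value undefined off simplices.\<close>

definition horizontal_equivariant_forms ::
  "('o, 'a) gpd \<Rightarrow> 'o set \<Rightarrow> 'o \<Rightarrow> ('a \<Rightarrow> 'a \<Rightarrow> bool) \<Rightarrow> nat \<Rightarrow> ('a list \<Rightarrow> 'a) set" where
  "horizontal_equivariant_forms \<Phi> M star nbP k =
     {\<theta>. (\<forall>us. isimp nbP (Pset \<Phi> M star) k us \<longrightarrow> \<theta> us \<in> Gset \<Phi> star) \<and>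
          (\<forall>us. \<not> isimp nbP (Pset \<Phi> M star) k us \<longrightarrow> \<theta> us = undefined) \<and>
          \<comment> \<open>horizontal\<close>
          (\<forall>us gs. isimp nbP (Pset \<Phi> M star) k us \<longrightarrow> length gs = k \<longrightarrow> set gs \<subseteq> Gset \<Phi> star \<longrightarrow>
              isimp nbP (Pset \<Phi> M star) k (hd us # map2 (cmp \<Phi>) (tl us) gs) \<longrightarrow>
              \<theta> (hd us # map2 (cmp \<Phi>) (tl us) gs) = \<theta> us) \<and>
          \<comment> \<open>equivariant\<close>
          (\<forall>us g. isimp nbP (Pset \<Phi> M star) k us \<longrightarrow> g \<in> Gset \<Phi> star \<longrightarrow>
              \<theta> (map (\<lambda>u. cmp \<Phi> u g) us) = cmp \<Phi> (ginv \<Phi> g) (cmp \<Phi> (\<theta> us) g))}"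

definition gauge_forms ::
  "('o, 'a) gpd \<Rightarrow> 'o set \<Rightarrow> ('o \<Rightarrow> 'o \<Rightarrow> bool) \<Rightarrow> nat \<Rightarrow> ('o list \<Rightarrow> 'a) set" where
  "gauge_forms \<Phi> M nbM k =
     {\<alpha>. (\<forall>as. isimp nbM M k as \<longrightarrow> \<alpha> as \<in> gauge_fibre \<Phi> (hd as)) \<and>
          (\<forall>as. \<not> isimp nbM M k as \<longrightarrow> \<alpha> as = undefined)}"

end

theory Submission
  imports Defs
begin

(*
  Two infinitesimal simplices u and v in P over the same simplex in M differ by the right
  action of the single element g = u0^-1 v0 of G, followed by moving the vertices u1, ..., uk
  vertically inside their fibres.  Horizontality makes a form theta blind to the vertical
  moves and equivariance turns the action of g into conjugation by g, so
  u0 theta(u) u0^-1 depends only on the base simplex: this is alpha.  Conversely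
  u0^-1 alpha(pi u) u0 is manifestly horizontal and equivariant, and the two constructions
  are mutually inverse.
*)

locale is_groupoid =
  fixes \<Phi> :: "('o, 'a) gpd"
  assumes groupoid: "groupoid \<Phi>"
begin

abbreviation comp :: "'a \<Rightarrow> 'a \<Rightarrow> 'a"  (infixr \<open>\<cdot>\<close> 75)
  where "g \<cdot> f \<equiv> cmp \<Phi> g f"

abbreviation inv_arr :: "'a \<Rightarrow> 'a"  (\<open>_\<^sup>-\<^sup>1\<close> [1000] 999)
  where "f\<^sup>-\<^sup>1 \<equiv> ginv \<Phi> f"

lemma idt_arr [simp]: "a \<in> Obj \<Phi> \<Longrightarrow> idt \<Phi> a \<in> Arr \<Phi>"
  and src_idt [simp]: "a \<in> Obj \<Phi> \<Longrightarrow> src \<Phi> (idt \<Phi> a) = a"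
  and tgt_idt [simp]: "a \<in> Obj \<Phi> \<Longrightarrow> tgt \<Phi> (idt \<Phi> a) = a"
  using groupoid unfolding groupoid_def by auto

lemma comp_arr [simp]: "f \<in> Arr \<Phi> \<Longrightarrow> g \<in> Arr \<Phi> \<Longrightarrow> src \<Phi> g = tgt \<Phi> f \<Longrightarrow> g \<cdot> f \<in> Arr \<Phi>"
  and src_comp [simp]: "f \<in> Arr \<Phi> \<Longrightarrow> g \<in> Arr \<Phi> \<Longrightarrow> src \<Phi> g = tgt \<Phi> f \<Longrightarrow> src \<Phi> (g \<cdot> f) = src \<Phi> f"
  and tgt_comp [simp]: "f \<in> Arr \<Phi> \<Longrightarrow> g \<in> Arr \<Phi> \<Longrightarrow> src \<Phi> g = tgt \<Phi> f \<Longrightarrow> tgt \<Phi> (g \<cdot> f) = tgt \<Phi> g"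
  using groupoid unfolding groupoid_def by auto

lemma comp_assoc [simp]:
  "f \<in> Arr \<Phi> \<Longrightarrow> g \<in> Arr \<Phi> \<Longrightarrow> h \<in> Arr \<Phi> \<Longrightarrow> src \<Phi> g = tgt \<Phi> f \<Longrightarrow> src \<Phi> h = tgt \<Phi> g
   \<Longrightarrow> (h \<cdot> g) \<cdot> f = h \<cdot> g \<cdot> f"
  using groupoid unfolding groupoid_def by metis

lemma comp_idt_src [simp]: "f \<in> Arr \<Phi> \<Longrightarrow> a = src \<Phi> f \<Longrightarrow> f \<cdot> idt \<Phi> a = f"
  and comp_idt_tgt [simp]: "f \<in> Arr \<Phi> \<Longrightarrow> a = tgt \<Phi> f \<Longrightarrow> idt \<Phi> a \<cdot> f = f"
  using groupoid unfolding groupoid_def by auto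

lemma inv_arr [simp]: "f \<in> Arr \<Phi> \<Longrightarrow> f\<^sup>-\<^sup>1 \<in> Arr \<Phi>"
  and src_inv [simp]: "f \<in> Arr \<Phi> \<Longrightarrow> src \<Phi> (f\<^sup>-\<^sup>1) = tgt \<Phi> f"
  and tgt_inv [simp]: "f \<in> Arr \<Phi> \<Longrightarrow> tgt \<Phi> (f\<^sup>-\<^sup>1) = src \<Phi> f"
  and comp_inv_left [simp]: "f \<in> Arr \<Phi> \<Longrightarrow> f\<^sup>-\<^sup>1 \<cdot> f = idt \<Phi> (src \<Phi> f)"
  and comp_inv_right [simp]: "f \<in> Arr \<Phi> \<Longrightarrow> f \<cdot> f\<^sup>-\<^sup>1 = idt \<Phi> (tgt \<Phi> f)"
  using groupoid unfolding groupoid_def by auto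

lemma inv_comp_cancel_left [simp]:
  assumes "f \<in> Arr \<Phi>" "g \<in> Arr \<Phi>" "src \<Phi> f = tgt \<Phi> g"
  shows "f\<^sup>-\<^sup>1 \<cdot> f \<cdot> g = g"
proof -
  have "f\<^sup>-\<^sup>1 \<cdot> f \<cdot> g = (f\<^sup>-\<^sup>1 \<cdot> f) \<cdot> g"
    using assms by (subst comp_assoc) auto
  also have "\<dots> = g"
    using assms comp_idt_tgt[of g] by simp
  finally show ?thesis .
qed

lemma comp_inv_cancel_left [simp]:
  assumes "f \<in> Arr \<Phi>" "g \<in> Arr \<Phi>" "tgt \<Phi> f = tgt \<Phi> g"
  shows "f \<cdot> f\<^sup>-\<^sup>1 \<cdot> g = g"
proof -
  have "f \<cdot> f\<^sup>-\<^sup>1 \<cdot> g = (f \<cdot> f\<^sup>-\<^sup>1) \<cdot> g"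
    using assms by (subst comp_assoc) auto
  also have "\<dots> = g"
    using assms comp_idt_tgt[of g] by simp
  finally show ?thesis .
qed

lemma inv_comp [simp]:
  assumes "f \<in> Arr \<Phi>" "g \<in> Arr \<Phi>" "src \<Phi> g = tgt \<Phi> f"
  shows "(g \<cdot> f)\<^sup>-\<^sup>1 = f\<^sup>-\<^sup>1 \<cdot> g\<^sup>-\<^sup>1"
proof -
  have "(g \<cdot> f)\<^sup>-\<^sup>1 = (g \<cdot> f)\<^sup>-\<^sup>1 \<cdot> (g \<cdot> f) \<cdot> f\<^sup>-\<^sup>1 \<cdot> g\<^sup>-\<^sup>1"
    using assms by simp
  also have "\<dots> = f\<^sup>-\<^sup>1 \<cdot> g\<^sup>-\<^sup>1"
    using assms by (subst inv_comp_cancel_left) auto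
  finally show ?thesis .
qed

end

lemma isimp_not_Nil: "isimp nb S k xs \<Longrightarrow> xs \<noteq> []"
  unfolding isimp_def by auto

lemma isimp_hd_in: "isimp nb S k xs \<Longrightarrow> hd xs \<in> S"
  unfolding isimp_def by (cases xs) auto

lemma isimp_tl: "isimp nb S k xs \<Longrightarrow> length (tl xs) = k \<and> set (tl xs) \<subseteq> S"
  unfolding isimp_def by (cases xs) auto

locale principal_bundle =
  fixes \<Phi> :: "('o, 'a) gpd" and M :: "'o set" and star :: 'o
    and nbM :: "'o \<Rightarrow> 'o \<Rightarrow> bool" and nbP :: "'a \<Rightarrow> 'a \<Rightarrow> bool"
  assumes setting: "pfb_setting \<Phi> M star nbM nbP"
begin

sublocale is_groupoid \<Phi>
  using setting by unfold_locales (simp add: pfb_setting_def)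

abbreviation "P \<equiv> Pset \<Phi> M star"
abbreviation "G \<equiv> Gset \<Phi> star"
abbreviation "HE \<equiv> horizontal_equivariant_forms \<Phi> M star nbP"
abbreviation "GF \<equiv> gauge_forms \<Phi> M nbM"

lemma M_Obj: "M \<subseteq> Obj \<Phi>"
  and arr_factors_through_P:
    "\<lbrakk>f \<in> Arr \<Phi>; src \<Phi> f \<in> M; tgt \<Phi> f \<in> M\<rbrakk> \<Longrightarrow> \<exists>x\<in>P. \<exists>y\<in>P. f = y \<cdot> x\<^sup>-\<^sup>1"
  and tgt_preserves_nb: "\<lbrakk>u \<in> P; v \<in> P; nbP u v\<rbrakk> \<Longrightarrow> nbM (tgt \<Phi> u) (tgt \<Phi> v)"
  and simplex_lifts:
    "\<lbrakk>isimp nbM M k as; x \<in> P; tgt \<Phi> x = hd as\<rbrakk>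
     \<Longrightarrow> \<exists>us. isimp nbP P k us \<and> hd us = x \<and> map (tgt \<Phi>) us = as"
  and act_preserves_nb: "\<lbrakk>g \<in> G; u \<in> P; v \<in> P; nbP u v\<rbrakk> \<Longrightarrow> nbP (u \<cdot> g) (v \<cdot> g)"
  using setting unfolding pfb_setting_def by blast+

lemma P_arr [simp]: "u \<in> P \<Longrightarrow> u \<in> Arr \<Phi>"
  and P_src [simp]: "u \<in> P \<Longrightarrow> src \<Phi> u = star"
  and P_tgt: "u \<in> P \<Longrightarrow> tgt \<Phi> u \<in> M"
  unfolding Pset_def by auto

lemma G_arr [simp]: "g \<in> G \<Longrightarrow> g \<in> Arr \<Phi>"
  and G_src [simp]: "g \<in> G \<Longrightarrow> src \<Phi> g = star"
  and G_tgt [simp]: "g \<in> G \<Longrightarrow> tgt \<Phi> g = star"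
  unfolding Gset_def by auto

lemma PI: "u \<in> Arr \<Phi> \<Longrightarrow> src \<Phi> u = star \<Longrightarrow> tgt \<Phi> u \<in> M \<Longrightarrow> u \<in> P"
  unfolding Pset_def by blast

lemma GI: "g \<in> Arr \<Phi> \<Longrightarrow> src \<Phi> g = star \<Longrightarrow> tgt \<Phi> g = star \<Longrightarrow> g \<in> G"
  unfolding Gset_def by blast

lemma gauge_fibreI: "f \<in> Arr \<Phi> \<Longrightarrow> src \<Phi> f = a \<Longrightarrow> tgt \<Phi> f = a \<Longrightarrow> f \<in> gauge_fibre \<Phi> a"
  and gauge_fibreD: "f \<in> gauge_fibre \<Phi> a \<Longrightarrow> f \<in> Arr \<Phi> \<and> src \<Phi> f = a \<and> tgt \<Phi> f = a"
  unfolding gauge_fibre_def by blast+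

lemma act_in_P [simp]: "u \<in> P \<Longrightarrow> g \<in> G \<Longrightarrow> u \<cdot> g \<in> P"
  by (intro PI) (simp_all add: P_tgt)

lemma fibre_quotient_in_G: "u \<in> P \<Longrightarrow> v \<in> P \<Longrightarrow> tgt \<Phi> u = tgt \<Phi> v \<Longrightarrow> u\<^sup>-\<^sup>1 \<cdot> v \<in> G"
  by (intro GI) simp_all

lemma conj_gauge_in_G: "u \<in> P \<Longrightarrow> f \<in> gauge_fibre \<Phi> (tgt \<Phi> u) \<Longrightarrow> u\<^sup>-\<^sup>1 \<cdot> f \<cdot> u \<in> G"
  by (intro GI) (simp_all add: gauge_fibreD)

lemma conj_G_in_gauge: "u \<in> P \<Longrightarrow> g \<in> G \<Longrightarrow> u \<cdot> g \<cdot> u\<^sup>-\<^sup>1 \<in> gauge_fibre \<Phi> (tgt \<Phi> u)"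
  by (intro gauge_fibreI) simp_all

(* The fullness of PP^-1 on M is used only here, to make pi surjective. *)
lemma ex_point_over:
  assumes "a \<in> M"
  shows "\<exists>u\<in>P. tgt \<Phi> u = a"
proof -
  have a: "a \<in> Obj \<Phi>"
    using assms M_Obj by blast
  have "src \<Phi> (idt \<Phi> a) \<in> M" "tgt \<Phi> (idt \<Phi> a) \<in> M"
    using a assms by simp_all
  then obtain x y where "x \<in> P" "y \<in> P" "idt \<Phi> a = y \<cdot> x\<^sup>-\<^sup>1"
    using arr_factors_through_P[OF idt_arr[OF a]] by blast
  then have "tgt \<Phi> y = a"
    using tgt_idt[OF a] by simp
  with \<open>y \<in> P\<close> show ?thesis
    by blast
qed

lemma isimp_map_tgt: "isimp nbP P k us \<Longrightarrow> isimp nbM M k (map (tgt \<Phi>) us)"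
  unfolding isimp_def by (fastforce intro: tgt_preserves_nb P_tgt)

lemma isimp_act: "isimp nbP P k us \<Longrightarrow> g \<in> G \<Longrightarrow> isimp nbP P k (map (\<lambda>u. u \<cdot> g) us)"
  unfolding isimp_def by (auto intro: act_preserves_nb)

lemma ex_simplex_over: "isimp nbM M k as \<Longrightarrow> \<exists>us. isimp nbP P k us \<and> map (tgt \<Phi>) us = as"
  using ex_point_over isimp_hd_in simplex_lifts by metis

lemma map_tgt_map2_act:
  "length xs = length gs \<Longrightarrow> set xs \<subseteq> P \<Longrightarrow> set gs \<subseteq> G
   \<Longrightarrow> map (tgt \<Phi>) (map2 (\<cdot>) xs gs) = map (tgt \<Phi>) xs"
  by (induction xs gs rule: list_induct2) auto

lemma map2_act_fibre_quotients:
  assumes "set xs \<subseteq> P" "set ys \<subseteq> P" "map (tgt \<Phi>) xs = map (tgt \<Phi>) ys"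
  shows "set (map2 (\<lambda>u v. u\<^sup>-\<^sup>1 \<cdot> v) xs ys) \<subseteq> G"
    and "map2 (\<cdot>) xs (map2 (\<lambda>u v. u\<^sup>-\<^sup>1 \<cdot> v) xs ys) = ys"
  using assms
  by (induction xs ys rule: list_induct2') (auto intro: fibre_quotient_in_G)

lemma same_base_simplex_decomposition:
  assumes us: "isimp nbP P k us" and vs: "isimp nbP P k vs"
    and base: "map (tgt \<Phi>) us = map (tgt \<Phi>) vs"
  obtains g gs where "g \<in> G" and "length gs = k" and "set gs \<subseteq> G"
    and "vs = hd (map (\<lambda>u. u \<cdot> g) us) # map2 (\<cdot>) (tl (map (\<lambda>u. u \<cdot> g) us)) gs"
proof -
  define g where "g = (hd us)\<^sup>-\<^sup>1 \<cdot> hd vs"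
  have hd_tgt: "tgt \<Phi> (hd us) = tgt \<Phi> (hd vs)"
    using base hd_map isimp_not_Nil[OF us] isimp_not_Nil[OF vs] by metis
  have g: "g \<in> G"
    unfolding g_def using isimp_hd_in[OF us] isimp_hd_in[OF vs] hd_tgt by (rule fibre_quotient_in_G)
  have hd_act: "hd (map (\<lambda>u. u \<cdot> g) us) = hd vs"
    unfolding g_def hd_map[OF isimp_not_Nil[OF us]]
    using isimp_hd_in[OF us] isimp_hd_in[OF vs] hd_tgt by simp
  have tl_us: "set (tl us) \<subseteq> P" and tl_vs: "set (tl vs) \<subseteq> P"
    using isimp_tl[OF us] isimp_tl[OF vs] by simp_all
  have tl_act: "set (tl (map (\<lambda>u. u \<cdot> g) us)) \<subseteq> P"
    using tl_us g by (auto simp: map_tl[symmetric])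
  have "map (tgt \<Phi>) (tl (map (\<lambda>u. u \<cdot> g) us)) = map (tgt \<Phi>) (tl us)"
    using tl_us g by (auto simp: map_tl[symmetric] map_eq_conv)
  also have "\<dots> = map (tgt \<Phi>) (tl vs)"
    using base by (metis map_tl)
  finally have tl_base: "map (tgt \<Phi>) (tl (map (\<lambda>u. u \<cdot> g) us)) = map (tgt \<Phi>) (tl vs)" .
  define gs where "gs = map2 (\<lambda>u v. u\<^sup>-\<^sup>1 \<cdot> v) (tl (map (\<lambda>u. u \<cdot> g) us)) (tl vs)"
  have "length gs = k"
    using isimp_tl[OF us] isimp_tl[OF vs] unfolding gs_def by simp
  moreover have "set gs \<subseteq> G" and "map2 (\<cdot>) (tl (map (\<lambda>u. u \<cdot> g) us)) gs = tl vs"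
    using map2_act_fibre_quotients[OF tl_act tl_vs tl_base] unfolding gs_def by simp_all
  ultimately show ?thesis
    using that g hd_act list.collapse[OF isimp_not_Nil[OF vs]] by metis
qed

lemma horizontal_equivariant_formsD:
  assumes "\<theta> \<in> HE k"
  shows "isimp nbP P k us \<Longrightarrow> \<theta> us \<in> G"
    and "\<not> isimp nbP P k us \<Longrightarrow> \<theta> us = undefined"
    and "\<lbrakk>isimp nbP P k us; length gs = k; set gs \<subseteq> G; isimp nbP P k (hd us # map2 (\<cdot>) (tl us) gs)\<rbrakk>
         \<Longrightarrow> \<theta> (hd us # map2 (\<cdot>) (tl us) gs) = \<theta> us"
    and "\<lbrakk>isimp nbP P k us; g \<in> G\<rbrakk> \<Longrightarrow> \<theta> (map (\<lambda>u. u \<cdot> g) us) = g\<^sup>-\<^sup>1 \<cdot> \<theta> us \<cdot> g"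
  using assms unfolding horizontal_equivariant_forms_def by auto

lemma gauge_formsD:
  assumes "\<alpha> \<in> GF k"
  shows "isimp nbM M k as \<Longrightarrow> \<alpha> as \<in> gauge_fibre \<Phi> (hd as)"
    and "\<not> isimp nbM M k as \<Longrightarrow> \<alpha> as = undefined"
  using assms unfolding gauge_forms_def by auto

lemma horizontal_equivariant_conj_eq:
  assumes \<theta>: "\<theta> \<in> HE k" and us: "isimp nbP P k us" and vs: "isimp nbP P k vs"
    and base: "map (tgt \<Phi>) us = map (tgt \<Phi>) vs"
  shows "hd vs \<cdot> \<theta> vs \<cdot> (hd vs)\<^sup>-\<^sup>1 = hd us \<cdot> \<theta> us \<cdot> (hd us)\<^sup>-\<^sup>1"
proof -
  obtain g gs where g: "g \<in> G" and gs: "length gs = k" "set gs \<subseteq> G"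
    and vs_eq: "vs = hd (map (\<lambda>u. u \<cdot> g) us) # map2 (\<cdot>) (tl (map (\<lambda>u. u \<cdot> g) us)) gs"
    using same_base_simplex_decomposition[OF us vs base] .
  have hd_vs: "hd vs = hd us \<cdot> g"
    using vs_eq hd_map[OF isimp_not_Nil[OF us]] by (metis list.sel(1))
  have "\<theta> vs = \<theta> (map (\<lambda>u. u \<cdot> g) us)"
    using horizontal_equivariant_formsD(3)[OF \<theta> isimp_act[OF us g] gs] vs vs_eq by simp
  also have "\<dots> = g\<^sup>-\<^sup>1 \<cdot> \<theta> us \<cdot> g"
    using horizontal_equivariant_formsD(4)[OF \<theta> us g] .
  finally have "\<theta> vs = g\<^sup>-\<^sup>1 \<cdot> \<theta> us \<cdot> g" .
  then show ?thesis
    using hd_vs g isimp_hd_in[OF us] horizontal_equivariant_formsD(1)[OF \<theta> us] by simp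
qed

definition simplex_over :: "nat \<Rightarrow> 'o list \<Rightarrow> 'a list" where
  "simplex_over k as = (SOME us. isimp nbP P k us \<and> map (tgt \<Phi>) us = as)"

definition descend_form :: "nat \<Rightarrow> ('a list \<Rightarrow> 'a) \<Rightarrow> 'o list \<Rightarrow> 'a" where
  "descend_form k \<theta> as =
     (if isimp nbM M k as
      then hd (simplex_over k as) \<cdot> \<theta> (simplex_over k as) \<cdot> (hd (simplex_over k as))\<^sup>-\<^sup>1
      else undefined)"

definition lift_form :: "nat \<Rightarrow> ('o list \<Rightarrow> 'a) \<Rightarrow> 'a list \<Rightarrow> 'a" where
  "lift_form k \<alpha> us =
     (if isimp nbP P k us then (hd us)\<^sup>-\<^sup>1 \<cdot> \<alpha> (map (tgt \<Phi>) us) \<cdot> hd us else undefined)"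

lemma simplex_over:
  assumes "isimp nbM M k as"
  shows isimp_simplex_over: "isimp nbP P k (simplex_over k as)"
    and map_tgt_simplex_over: "map (tgt \<Phi>) (simplex_over k as) = as"
  using someI_ex[OF ex_simplex_over[OF assms]] unfolding simplex_over_def by blast+

lemma descend_form_simplex:
  assumes \<theta>: "\<theta> \<in> HE k" and us: "isimp nbP P k us"
  shows "descend_form k \<theta> (map (tgt \<Phi>) us) = hd us \<cdot> \<theta> us \<cdot> (hd us)\<^sup>-\<^sup>1"
proof -
  have as: "isimp nbM M k (map (tgt \<Phi>) us)"
    using isimp_map_tgt[OF us] .
  show ?thesis
    using horizontal_equivariant_conj_eq[OF \<theta> us isimp_simplex_over[OF as]]
    unfolding descend_form_def map_tgt_simplex_over[OF as] by (simp add: as)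
qed

lemma descend_form_in_gauge_forms:
  assumes \<theta>: "\<theta> \<in> HE k"
  shows "descend_form k \<theta> \<in> GF k"
proof -
  have "descend_form k \<theta> as \<in> gauge_fibre \<Phi> (hd as)" if as: "isimp nbM M k as" for as
  proof -
    obtain us where us: "isimp nbP P k us" and base: "as = map (tgt \<Phi>) us"
      using ex_simplex_over[OF as] by metis
    show ?thesis
      unfolding base descend_form_simplex[OF \<theta> us] hd_map[OF isimp_not_Nil[OF us]]
      using conj_G_in_gauge isimp_hd_in[OF us] horizontal_equivariant_formsD(1)[OF \<theta> us] by simp
  qed
  then show ?thesis
    unfolding gauge_forms_def descend_form_def by simp
qed

lemma gauge_form_over_simplex:
  assumes "\<alpha> \<in> GF k" and us: "isimp nbP P k us"
  shows "\<alpha> (map (tgt \<Phi>) us) \<in> gauge_fibre \<Phi> (tgt \<Phi> (hd us))"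
  using gauge_formsD(1)[OF assms(1) isimp_map_tgt[OF us]] by (simp add: hd_map[OF isimp_not_Nil[OF us]])

lemma lift_form_in_horizontal_equivariant_forms:
  assumes \<alpha>: "\<alpha> \<in> GF k"
  shows "lift_form k \<alpha> \<in> HE k"
proof -
  have in_G: "lift_form k \<alpha> us \<in> G" if us: "isimp nbP P k us" for us
    unfolding lift_form_def
    using conj_gauge_in_G isimp_hd_in[OF us] gauge_form_over_simplex[OF \<alpha> us] us by simp
  have horizontal: "lift_form k \<alpha> (hd us # map2 (\<cdot>) (tl us) gs) = lift_form k \<alpha> us"
    if us: "isimp nbP P k us" and gs: "length gs = k" "set gs \<subseteq> G"
      and shifted: "isimp nbP P k (hd us # map2 (\<cdot>) (tl us) gs)" for us gs
  proof -
    have "map (tgt \<Phi>) (hd us # map2 (\<cdot>) (tl us) gs) = map (tgt \<Phi>) (hd us # tl us)"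
      using map_tgt_map2_act[of "tl us" gs] isimp_tl[OF us] gs by simp
    then have "map (tgt \<Phi>) (hd us # map2 (\<cdot>) (tl us) gs) = map (tgt \<Phi>) us"
      using list.collapse[OF isimp_not_Nil[OF us]] by simp
    then show ?thesis
      unfolding lift_form_def using us shifted by simp
  qed
  have equivariant: "lift_form k \<alpha> (map (\<lambda>u. u \<cdot> g) us) = g\<^sup>-\<^sup>1 \<cdot> lift_form k \<alpha> us \<cdot> g"
    if us: "isimp nbP P k us" and g: "g \<in> G" for us g
  proof -
    have base: "map (tgt \<Phi>) (map (\<lambda>u. u \<cdot> g) us) = map (tgt \<Phi>) us"
      using us g unfolding isimp_def by (auto simp: map_eq_conv)
    show ?thesis
      unfolding lift_form_def base hd_map[OF isimp_not_Nil[OF us]]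
      using isimp_act[OF us g] us g isimp_hd_in[OF us] gauge_fibreD[OF gauge_form_over_simplex[OF \<alpha> us]]
      by simp
  qed
  show ?thesis
    unfolding horizontal_equivariant_forms_def
    using in_G horizontal equivariant by (simp add: lift_form_def)
qed

lemma descend_lift_form:
  assumes \<alpha>: "\<alpha> \<in> GF k"
  shows "descend_form k (lift_form k \<alpha>) = \<alpha>"
proof
  fix as
  show "descend_form k (lift_form k \<alpha>) as = \<alpha> as"
  proof (cases "isimp nbM M k as")
    case True
    then obtain us where us: "isimp nbP P k us" and base: "as = map (tgt \<Phi>) us"
      using ex_simplex_over by metis
    show ?thesis
      unfolding base descend_form_simplex[OF lift_form_in_horizontal_equivariant_forms[OF \<alpha>] us]
      using us isimp_hd_in[OF us] gauge_fibreD[OF gauge_form_over_simplex[OF \<alpha> us]]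
      by (simp add: lift_form_def)
  next
    case False
    then show ?thesis
      using gauge_formsD(2)[OF \<alpha>] by (simp add: descend_form_def)
  qed
qed

lemma lift_descend_form:
  assumes \<theta>: "\<theta> \<in> HE k"
  shows "lift_form k (descend_form k \<theta>) = \<theta>"
proof
  fix us
  show "lift_form k (descend_form k \<theta>) us = \<theta> us"
  proof (cases "isimp nbP P k us")
    case True
    then show ?thesis
      using descend_form_simplex[OF \<theta> True] isimp_hd_in[OF True] horizontal_equivariant_formsD(1)[OF \<theta> True]
      by (simp add: lift_form_def)
  next
    case False
    then show ?thesis
      using horizontal_equivariant_formsD(2)[OF \<theta>] by (simp add: lift_form_def)
  qed
qed

lemma bij_betw_descend_form: "bij_betw (descend_form k) (HE k) (GF k)"
  by (rule bij_betw_byWitness[where f' = "lift_form k"])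
    (auto simp: lift_descend_form descend_lift_form
      descend_form_in_gauge_forms lift_form_in_horizontal_equivariant_forms)

lemma inv_into_descend_form: "\<alpha> \<in> GF k \<Longrightarrow> inv_into (HE k) (descend_form k) \<alpha> = lift_form k \<alpha>"
  by (intro inv_into_f_eq bij_betw_imp_inj_on[OF bij_betw_descend_form]
      lift_form_in_horizontal_equivariant_forms descend_lift_form)

end

theorem proposition3:
  fixes \<Phi> :: "('o, 'a) gpd" and M :: "'o set" and star :: 'o
    and nbM :: "'o \<Rightarrow> 'o \<Rightarrow> bool" and nbP :: "'a \<Rightarrow> 'a \<Rightarrow> bool" and k :: nat
  assumes "pfb_setting \<Phi> M star nbM nbP"
  shows "\<exists>F. bij_betw F (horizontal_equivariant_forms \<Phi> M star nbP k) (gauge_forms \<Phi> M nbM k) \<and>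
     (\<forall>\<theta>\<in>horizontal_equivariant_forms \<Phi> M star nbP k. \<forall>us. isimp nbP (Pset \<Phi> M star) k us \<longrightarrow>
        cmp \<Phi> (hd us) (\<theta> us) = cmp \<Phi> (F \<theta> (map (tgt \<Phi>) us)) (hd us)) \<and>
     (\<forall>\<theta>\<in>horizontal_equivariant_forms \<Phi> M star nbP k. \<forall>us. isimp nbP (Pset \<Phi> M star) k us \<longrightarrow>
        F \<theta> (map (tgt \<Phi>) us) = cmp \<Phi> (cmp \<Phi> (hd us) (\<theta> us)) (ginv \<Phi> (hd us))) \<and>
     (\<forall>\<alpha>\<in>gauge_forms \<Phi> M nbM k. \<forall>us. isimp nbP (Pset \<Phi> M star) k us \<longrightarrow>
        inv_into (horizontal_equivariant_forms \<Phi> M star nbP k) F \<alpha> us =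
          cmp \<Phi> (ginv \<Phi> (hd us)) (cmp \<Phi> (\<alpha> (map (tgt \<Phi>) us)) (hd us)))"
proof -
  interpret principal_bundle \<Phi> M star nbM nbP
    by (rule principal_bundle.intro) fact
  show ?thesis
  proof (intro exI[of _ "descend_form k"] conjI ballI allI impI)
    show "bij_betw (descend_form k) (HE k) (GF k)"
      by (rule bij_betw_descend_form)
  next
    fix \<theta> us
    assume \<theta>: "\<theta> \<in> HE k" and us: "isimp nbP P k us"
    have hd_us_theta: "hd us \<in> P" "\<theta> us \<in> G"
      using isimp_hd_in[OF us] horizontal_equivariant_formsD(1)[OF \<theta> us] by simp_all
    show "hd us \<cdot> \<theta> us = descend_form k \<theta> (map (tgt \<Phi>) us) \<cdot> hd us"
      using descend_form_simplex[OF \<theta> us] hd_us_theta by simp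
    show "descend_form k \<theta> (map (tgt \<Phi>) us) = (hd us \<cdot> \<theta> us) \<cdot> (hd us)\<^sup>-\<^sup>1"
      using descend_form_simplex[OF \<theta> us] hd_us_theta by simp
  next
    fix \<alpha> us
    assume "\<alpha> \<in> GF k" and "isimp nbP P k us"
    then show "inv_into (HE k) (descend_form k) \<alpha> us = (hd us)\<^sup>-\<^sup>1 \<cdot> \<alpha> (map (tgt \<Phi>) us) \<cdot> hd us"
      by (simp add: inv_into_descend_form lift_form_def)
  qed
qed

end
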